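(* For every integer $n>24$, the generalized Petersen graph $GP(n,4)$ is not $2$-distance-balanced.
   Context: For a connected graph $G$ and $x,y\in V(G)$, $d_G(x,y)$ denotes the distance. Let $W_{xy}=\{w\in V(G): d_G(w,x)<d_G(w,y)\}$. $G$ is called $\ell$-distance-balanced if $|W_{xy}|=|W_{yx}|$ for every pair $x,y\in V(G)$ with $d_G(x,y)=\ell$. For integers $n\ge 3$ and $1\le k<n/2$, the generalized Petersen graph $GP(n,k)$ has vertex set $\{u_i: i\in\mathbb{Z}_n\}\cup\{v_i: i\in\mathbb{Z}_n\}$ and edge set $\{u_iu_{i+1}: i\in\mathbb{Z}_n\}\cup\{v_iv_{i+k}: i\in\mathbb{Z}_n\}\cup\{u_iv_i: i\in\mathbb{Z}_n\}$. *)

theory Defs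
  imports Main
begin

fun is_walk :: "('a \<Rightarrow> 'a \<Rightarrow> bool) \<Rightarrow> 'a list \<Rightarrow> bool" where
  "is_walk E [] = False"
| "is_walk E [x] = True"
| "is_walk E (x # y # xs) = (E x y \<and> is_walk E (y # xs))"

text \<open>Graph distance: least number of edges of a walk from x to y inside V
  (only meaningful for connected graphs, which is the case considered).\<close>
definition gdist :: "'a set \<Rightarrow> ('a \<Rightarrow> 'a \<Rightarrow> bool) \<Rightarrow> 'a \<Rightarrow> 'a \<Rightarrow> nat" where
  "gdist V E x y = (LEAST m. \<exists>p. is_walk E p \<and> set p \<subseteq> V \<and> hd p = x \<and> last p = y
                                  \<and> length p = Suc m)"

definition W_set :: "'a set \<Rightarrow> ('a \<Rightarrow> 'a \<Rightarrow> bool) \<Rightarrow> 'a \<Rightarrow> 'a \<Rightarrow> 'a set" where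
  "W_set V E x y = {w \<in> V. gdist V E w x < gdist V E w y}"

definition distance_balanced :: "nat \<Rightarrow> 'a set \<Rightarrow> ('a \<Rightarrow> 'a \<Rightarrow> bool) \<Rightarrow> bool" where
  "distance_balanced l V E \<longleftrightarrow>
     (\<forall>x\<in>V. \<forall>y\<in>V. gdist V E x y = l \<longrightarrow> card (W_set V E x y) = card (W_set V E y x))"

text \<open>Generalized Petersen graph GP(n,k): vertex (False, i) is u_i, (True, i) is v_i,
  with i ranging over {0..<n} representing Z_n.\<close>
definition gp_verts :: "nat \<Rightarrow> (bool \<times> nat) set" where
  "gp_verts n = {(b, i). i < n}"

definition gp_adj :: "nat \<Rightarrow> nat \<Rightarrow> (bool \<times> nat) \<Rightarrow> (bool \<times> nat) \<Rightarrow> bool" where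
  "gp_adj n k a c = (case (a, c) of
      ((False, i), (False, j)) \<Rightarrow> i < n \<and> j < n \<and> (j = (i + 1) mod n \<or> i = (j + 1) mod n)
    | ((True, i), (True, j)) \<Rightarrow> i < n \<and> j < n \<and> (j = (i + k) mod n \<or> i = (j + k) mod n)
    | ((False, i), (True, j)) \<Rightarrow> i < n \<and> i = j
    | ((True, i), (False, j)) \<Rightarrow> i < n \<and> i = j)"

end

(*
  Take x = u_0 and y = v_4, which are at distance 2 (via v_0). For n > 24 the distances from u_0
  and from v_0 have closed forms: a function f with f x = 0 that changes by at most 1 along edges
  and decreases along some edge at every other vertex is the distance to x. Rotating by 4 gives
  the distances from v_4. Then |W_xy| - |W_yx| is a sum over i of contributions of u_i and v_i.
  Pairing i with n - i, every pair with 4 <= i <= n - 4 contributes at most 0, and at most -2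
  when 4 divides i <= 24; for n >= 56 this outweighs the contributions 1 of i = 0 and 9 of the
  pairs i = 1, 2, 3. The cases 24 < n < 56 are decided by evaluation.
*)
theory Submission
  imports Defs
begin

section \<open>Distances certified by potentials\<close>

definition distance_potential :: "'a set \<Rightarrow> ('a \<Rightarrow> 'a \<Rightarrow> bool) \<Rightarrow> 'a \<Rightarrow> ('a \<Rightarrow> nat) \<Rightarrow> bool" where
  "distance_potential V E x f \<longleftrightarrow> x \<in> V \<and> f x = 0
     \<and> (\<forall>a\<in>V. \<forall>b\<in>V. E a b \<longrightarrow> f a \<le> f b + 1)
     \<and> (\<forall>w\<in>V. w \<noteq> x \<longrightarrow> (\<exists>w'\<in>V. E w w' \<and> f w' < f w))"

lemma walk_potential_bound:
  assumes lip: "\<And>a b. a \<in> V \<Longrightarrow> b \<in> V \<Longrightarrow> E a b \<Longrightarrow> f a \<le> f b + (1::nat)"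
  shows "is_walk E p \<Longrightarrow> set p \<subseteq> V \<Longrightarrow> f (hd p) \<le> f (last p) + (length p - 1)"
proof (induction p)
  case (Cons x xs)
  show ?case
  proof (cases xs)
    case (Cons y ys)
    then show ?thesis using Cons.IH Cons.prems lip[of x y] by force
  qed simp
qed simp

lemma walk_along_distance_potential:
  assumes f: "distance_potential V E x f"
  shows "w \<in> V \<Longrightarrow> f w = m \<Longrightarrow>
    \<exists>p. is_walk E p \<and> set p \<subseteq> V \<and> hd p = w \<and> last p = x \<and> length p = Suc m"
proof (induction m arbitrary: w)
  case 0
  then have "w = x" using f by (fastforce simp: distance_potential_def)
  then show ?case using f by (intro exI[of _ "[x]"]) (simp add: distance_potential_def)
next
  case (Suc m)
  then have "w \<noteq> x" using f by (auto simp: distance_potential_def)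
  then obtain w' where w': "w' \<in> V" "E w w'" "f w' < f w"
    using f Suc.prems by (auto simp: distance_potential_def)
  then have "f w' = m" using f Suc.prems by (fastforce simp: distance_potential_def)
  then obtain p where p: "is_walk E p" "set p \<subseteq> V" "hd p = w'" "last p = x" "length p = Suc m"
    using Suc.IH w' by blast
  then obtain ys where "p = w' # ys" by (cases p) auto
  then show ?case using p w' Suc.prems by (intro exI[of _ "w # p"]) auto
qed

lemma gdist_eq_distance_potential:
  assumes f: "distance_potential V E x f" and w: "w \<in> V"
  shows "gdist V E w x = f w"
  unfolding gdist_def
proof (rule Least_equality)
  show "\<exists>p. is_walk E p \<and> set p \<subseteq> V \<and> hd p = w \<and> last p = x \<and> length p = Suc (f w)"
    using walk_along_distance_potential[OF f w] by blast
next
  fix m assume "\<exists>p. is_walk E p \<and> set p \<subseteq> V \<and> hd p = w \<and> last p = x \<and> length p = Suc m"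
  then obtain p where p: "is_walk E p" "set p \<subseteq> V" "hd p = w" "last p = x" "length p = Suc m"
    by blast
  have "f w \<le> f x + m"
    using walk_potential_bound[of V E f p] f p by (auto simp: distance_potential_def)
  then show "f w \<le> m" using f by (simp add: distance_potential_def)
qed

lemma distance_potential_automorphism:
  assumes f: "distance_potential V E x f"
    and maps: "\<And>w. w \<in> V \<Longrightarrow> \<sigma> w \<in> V" "\<And>w. w \<in> V \<Longrightarrow> \<tau> w \<in> V"
    and inverse: "\<And>w. w \<in> V \<Longrightarrow> \<tau> (\<sigma> w) = w" "\<And>w. w \<in> V \<Longrightarrow> \<sigma> (\<tau> w) = w"
    and adj: "\<And>a b. E a b \<Longrightarrow> E (\<sigma> a) (\<sigma> b)" "\<And>a b. E a b \<Longrightarrow> E (\<tau> a) (\<tau> b)"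
  shows "distance_potential V E (\<sigma> x) (f \<circ> \<tau>)"
  unfolding distance_potential_def
proof (intro conjI ballI impI)
  show "\<sigma> x \<in> V" "(f \<circ> \<tau>) (\<sigma> x) = 0" using f maps inverse by (auto simp: distance_potential_def)
  show "(f \<circ> \<tau>) a \<le> (f \<circ> \<tau>) b + 1" if "a \<in> V" "b \<in> V" "E a b" for a b
    using f that maps adj by (simp add: distance_potential_def)
  show "\<exists>w'\<in>V. E w w' \<and> (f \<circ> \<tau>) w' < (f \<circ> \<tau>) w" if w: "w \<in> V" "w \<noteq> \<sigma> x" for w
  proof -
    have "\<tau> w \<noteq> x" using w inverse by auto
    then obtain z where z: "z \<in> V" "E (\<tau> w) z" "f z < f (\<tau> w)"
      using f maps(2)[OF w(1)] by (auto simp: distance_potential_def)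
    have "E w (\<sigma> z)" using adj(1)[OF z(2)] inverse(2)[OF w(1)] by simp
    then show ?thesis using z maps inverse by (intro bexI[of _ "\<sigma> z"]) auto
  qed
qed

section \<open>Generalized Petersen graphs\<close>

lemma mod_add_diff_cancel:
  fixes i n s :: nat
  assumes "i < n" "s \<le> n"
  shows "((i + (n - s)) mod n + s) mod n = i"
proof -
  have "((i + (n - s)) mod n + s) mod n = (i + n) mod n"
    using assms(2) by (simp add: mod_add_left_eq)
  then show ?thesis using assms(1) by simp
qed

lemma mod_add_diff:
  fixes i n s :: nat
  assumes "i < n" "s \<le> n"
  shows "(i + (n - s)) mod n = (if s \<le> i then i - s else i + n - s)"
proof (cases "s \<le> i")
  case True
  then have "i + (n - s) = (i - s) + n" using assms by simp
  then show ?thesis using True assms(1) by (metis less_imp_diff_less mod_add_self2 mod_less)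
qed (use assms in simp)

lemma gp_adj_iff:
  "gp_adj n k (b1, i) (b2, j) \<longleftrightarrow>
     (\<not> b1 \<and> \<not> b2 \<and> i < n \<and> j < n \<and> (j = (i + 1) mod n \<or> i = (j + 1) mod n)) \<or>
     (b1 \<and> b2 \<and> i < n \<and> j < n \<and> (j = (i + k) mod n \<or> i = (j + k) mod n)) \<or>
     (b1 \<noteq> b2 \<and> i < n \<and> i = j)"
  by (cases b1; cases b2) (auto simp: gp_adj_def)

lemma gp_adj_outer_succ: "i < n \<Longrightarrow> gp_adj n k (False, i) (False, (i + 1) mod n)"
  by (simp add: gp_adj_iff)

lemma gp_adj_inner_succ: "i < n \<Longrightarrow> gp_adj n k (True, i) (True, (i + k) mod n)"
  by (simp add: gp_adj_iff)

lemma gp_adj_spoke: "i < n \<Longrightarrow> gp_adj n k (b, i) (\<not> b, i)"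
  by (simp add: gp_adj_iff)

lemma gp_adj_outer_pred: "i < n \<Longrightarrow> gp_adj n k (False, i) (False, (i + (n - 1)) mod n)"
  using mod_add_diff_cancel[of i n 1] by (auto simp: gp_adj_iff)

lemma gp_adj_inner_pred:
  "i < n \<Longrightarrow> k \<le> n \<Longrightarrow> gp_adj n k (True, i) (True, (i + (n - k)) mod n)"
  using mod_add_diff_cancel[of i n k] by (auto simp: gp_adj_iff)

definition gp_rot :: "nat \<Rightarrow> nat \<Rightarrow> bool \<times> nat \<Rightarrow> bool \<times> nat" where
  "gp_rot n j w = (fst w, (snd w + j) mod n)"

lemma gp_rot_in_verts: "0 < n \<Longrightarrow> gp_rot n j w \<in> gp_verts n"
  by (cases w) (auto simp: gp_rot_def gp_verts_def)

lemma gp_adj_rot: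
  assumes "0 < n" "gp_adj n k a b"
  shows "gp_adj n k (gp_rot n j a) (gp_rot n j b)"
proof -
  obtain b1 i b2 i' where ab: "a = (b1, i)" "b = (b2, i')" by (cases a, cases b) auto
  have lt: "(x + j) mod n < n" for x using assms(1) by simp
  have shift: "((x + s) mod n + j) mod n = ((x + j) mod n + s) mod n" for x s
    by (metis add.commute add.left_commute mod_add_left_eq)
  from assms(2) show ?thesis
    unfolding ab gp_rot_def gp_adj_iff fst_conv snd_conv using lt shift[of _ 1] shift[of _ k]
    by metis
qed

lemma gp_rot_rot:
  assumes "w \<in> gp_verts n" "(j + j') mod n = 0"
  shows "gp_rot n j (gp_rot n j' w) = w"
proof -
  obtain b i where w: "w = (b, i)" "i < n" using assms(1) by (cases w) (auto simp: gp_verts_def)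
  have "((i + j') mod n + j) mod n = (i + (j + j')) mod n"
    unfolding mod_add_left_eq by (simp add: ac_simps)
  also have "\<dots> = (i + (j + j') mod n) mod n"
    by (simp add: mod_add_right_eq)
  finally show ?thesis using w assms(2) by (simp add: gp_rot_def)
qed

definition cyclic_lipschitz :: "nat \<Rightarrow> nat \<Rightarrow> (nat \<Rightarrow> nat) \<Rightarrow> bool" where
  "cyclic_lipschitz n s R \<longleftrightarrow> (\<forall>i<n. R ((i + s) mod n) \<le> R i + 1 \<and> R i \<le> R ((i + s) mod n) + 1)"

lemma cyclic_lipschitzI:
  assumes "s \<le> n"
    and "\<And>i. i + s < n \<Longrightarrow> R (i + s) \<le> R i + 1 \<and> R i \<le> R (i + s) + 1"
    and "\<And>i. i < n \<Longrightarrow> n \<le> i + s \<Longrightarrow> R (i + s - n) \<le> R i + 1 \<and> R i \<le> R (i + s - n) + 1"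
  shows "cyclic_lipschitz n s R"
  unfolding cyclic_lipschitz_def
proof (intro allI impI)
  fix i assume "i < n"
  moreover have "i + s < n \<Longrightarrow> (i + s) mod n = i + s" by simp
  moreover have "n \<le> i + s \<Longrightarrow> i < n \<Longrightarrow> (i + s) mod n = i + s - n"
    using assms(1) by (simp add: le_mod_geq)
  ultimately show "R ((i + s) mod n) \<le> R i + 1 \<and> R i \<le> R ((i + s) mod n) + 1"
    using assms(2,3) by (cases "i + s < n") auto
qed

definition gp_potential :: "(nat \<Rightarrow> nat) \<Rightarrow> (nat \<Rightarrow> nat) \<Rightarrow> bool \<times> nat \<Rightarrow> nat" where
  "gp_potential R S w = (if fst w then S (snd w) else R (snd w))"

lemma gp_potential_lipschitz:
  assumes "cyclic_lipschitz n 1 R" "cyclic_lipschitz n k S"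
    and "\<And>i. i < n \<Longrightarrow> R i \<le> S i + 1 \<and> S i \<le> R i + 1"
    and "gp_adj n k a b"
  shows "gp_potential R S a \<le> gp_potential R S b + 1"
proof -
  obtain b1 i b2 j where ab: "a = (b1, i)" "b = (b2, j)" by (cases a, cases b) auto
  from assms(4) show ?thesis
    unfolding ab gp_adj_iff gp_potential_def using assms(1-3)
    by (auto simp: cyclic_lipschitz_def)
qed

lemma gp_potential_fiber [simp]:
  "gp_potential R S (False, i) = R i" "gp_potential R S (True, i) = S i"
  by (simp_all add: gp_potential_def)

lemma gp_potential_descent_outer:
  assumes "i < n"
    and "R ((i + 1) mod n) < R i \<or> R ((i + (n - 1)) mod n) < R i \<or> S i < R i"
  shows "\<exists>w\<in>gp_verts n. gp_adj n k (False, i) w \<and> gp_potential R S w < R i"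
proof -
  have "(False, (i + 1) mod n) \<in> gp_verts n" "(False, (i + (n - 1)) mod n) \<in> gp_verts n"
    "(True, i) \<in> gp_verts n"
    using assms(1) by (auto simp: gp_verts_def)
  then show ?thesis
    using assms(2) gp_adj_outer_succ[OF assms(1)] gp_adj_outer_pred[OF assms(1)]
      gp_adj_spoke[OF assms(1), of k False] gp_potential_fiber
    by (metis (no_types, lifting))
qed

lemma gp_potential_descent_inner:
  assumes "i < n" "k \<le> n"
    and "S ((i + k) mod n) < S i \<or> S ((i + (n - k)) mod n) < S i \<or> R i < S i"
  shows "\<exists>w\<in>gp_verts n. gp_adj n k (True, i) w \<and> gp_potential R S w < S i"
proof -
  have "(True, (i + k) mod n) \<in> gp_verts n" "(True, (i + (n - k)) mod n) \<in> gp_verts n"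
    "(False, i) \<in> gp_verts n"
    using assms(1) by (auto simp: gp_verts_def)
  then show ?thesis
    using assms(3) gp_adj_inner_succ[OF assms(1)] gp_adj_inner_pred[OF assms(1,2)]
      gp_adj_spoke[OF assms(1), of k True] gp_potential_fiber
    by (metis (no_types, lifting))
qed

lemma distance_potential_gp_potential:
  assumes base: "x \<in> gp_verts n" "gp_potential R S x = 0" and "k \<le> n"
    and lip: "cyclic_lipschitz n 1 R" "cyclic_lipschitz n k S"
      "\<And>i. i < n \<Longrightarrow> R i \<le> S i + 1 \<and> S i \<le> R i + 1"
    and outer: "\<And>i. i < n \<Longrightarrow> (False, i) \<noteq> x \<Longrightarrow>
      R ((i + 1) mod n) < R i \<or> R ((i + (n - 1)) mod n) < R i \<or> S i < R i"
    and inner: "\<And>i. i < n \<Longrightarrow> (True, i) \<noteq> x \<Longrightarrow>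
      S ((i + k) mod n) < S i \<or> S ((i + (n - k)) mod n) < S i \<or> R i < S i"
  shows "distance_potential (gp_verts n) (gp_adj n k) x (gp_potential R S)"
  unfolding distance_potential_def
proof (intro conjI ballI impI)
  show "x \<in> gp_verts n" "gp_potential R S x = 0" by (fact base)+
  show "gp_potential R S a \<le> gp_potential R S b + 1" if "gp_adj n k a b" for a b
    using gp_potential_lipschitz[OF lip that] .
  show "\<exists>w'\<in>gp_verts n. gp_adj n k w w' \<and> gp_potential R S w' < gp_potential R S w"
    if w_in: "w \<in> gp_verts n" and w_ne: "w \<noteq> x" for w
  proof -
    obtain b i where w: "w = (b, i)" "i < n" using w_in by (cases w) (auto simp: gp_verts_def)
    show ?thesis
    proof (cases b)
      case False
      then have "(False, i) \<noteq> x" using w w_ne by simp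
      with outer[OF w(2)] show ?thesis
        using gp_potential_descent_outer[where R = R and S = S, OF w(2)] w False by simp
    next
      case True
      then have "(True, i) \<noteq> x" using w w_ne by simp
      with inner[OF w(2)] show ?thesis
        using gp_potential_descent_inner[where R = R and S = S, OF w(2) \<open>k \<le> n\<close>] w True by simp
    qed
  qed
qed

section \<open>Distances in GP(n,4)\<close>

text \<open>\<open>1 + reach m\<close> is the distance from \<open>u\<^sub>0\<close> to \<open>v\<^sub>m\<close> in the infinite graph GP(\<int>,4).\<close>

definition reach :: "nat \<Rightarrow> nat" where
  "reach m = m div 4 + min 2 (m mod 4)"

lemma reach_small [simp]:
  "reach 0 = 0" "reach (Suc 0) = 1" "reach 2 = 2" "reach 3 = 2" "reach 4 = 1"
  by (simp_all add: reach_def)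

lemma reach_add4: "reach (m + 4) = reach m + 1"
  by (simp add: reach_def)

lemma reach_pos: "0 < m \<Longrightarrow> 0 < reach m"
  by (auto simp: reach_def min_def)

lemma reach_le: "reach m \<le> m"
  by (auto simp: reach_def min_def)

lemma reach_bounds: "m div 4 \<le> reach m" "reach m \<le> m div 4 + 2"
  by (simp_all add: reach_def)

lemma reach_Suc: "reach (Suc m) \<le> reach m + 1 \<and> reach m \<le> reach (Suc m) + 1"
  by (auto simp: reach_def div_Suc mod_Suc min_def)

lemma reach_dvd4: "m mod 4 = 0 \<Longrightarrow> reach m = m div 4"
  by (simp add: reach_def)

lemma reach_add2_le: "4 \<le> m \<Longrightarrow> reach m + 2 \<le> m"
  by (auto simp: reach_def min_def) (use div_mult_mod_eq[of m 4] in linarith)+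

lemma reach_Suc_up: "m mod 4 = 0 \<or> m mod 4 = 1 \<Longrightarrow> reach (Suc m) = reach m + 1"
  by (auto simp: reach_def div_Suc mod_Suc)

lemma reach_Suc_down: "m mod 4 = 3 \<Longrightarrow> reach m = reach (Suc m) + 1"
  by (auto simp: reach_def div_Suc mod_Suc)

lemma reach_le4: "m \<le> 4 \<Longrightarrow> reach m \<le> 2"
  by (cases "m = 4") (auto simp: reach_def min_def)

definition reach_cyc :: "nat \<Rightarrow> nat \<Rightarrow> nat" where
  "reach_cyc n i = min (reach i) (reach (n - i))"

text \<open>Distances from \<open>u\<^sub>0\<close> to \<open>u\<^sub>i\<close>, from \<open>u\<^sub>0\<close> to \<open>v\<^sub>i\<close> (equal to that from \<open>v\<^sub>0\<close> to \<open>u\<^sub>i\<close>)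
  and from \<open>v\<^sub>0\<close> to \<open>v\<^sub>i\<close>, valid for \<open>n > 24\<close>; the terms \<open>i div 4\<close> and \<open>(n - i) div 4\<close> count walks
  along inner edges only.\<close>

definition dist_uu :: "nat \<Rightarrow> nat \<Rightarrow> nat" where
  "dist_uu n i = min (min i (n - i)) (2 + reach_cyc n i)"

definition dist_uv :: "nat \<Rightarrow> nat \<Rightarrow> nat" where
  "dist_uv n i = 1 + reach_cyc n i"

definition dist_vv :: "nat \<Rightarrow> nat \<Rightarrow> nat" where
  "dist_vv n i = min (2 + reach_cyc n i)
     (min (if i mod 4 = 0 then i div 4 else 2 + reach_cyc n i)
          (if (n - i) mod 4 = 0 then (n - i) div 4 else 2 + reach_cyc n i))"

lemma reach_cyc_Suc:
  "Suc i < n \<Longrightarrow> reach_cyc n (Suc i) \<le> reach_cyc n i + 1 \<and> reach_cyc n i \<le> reach_cyc n (Suc i) + 1"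
  using reach_Suc[of i] reach_Suc[of "n - Suc i"] Suc_diff_Suc[of i n]
  unfolding reach_cyc_def by (simp add: min_def)

lemma reach_cyc_add4:
  assumes "i + 4 < n"
  shows "reach_cyc n (i + 4) \<le> reach_cyc n i + 1 \<and> reach_cyc n i \<le> reach_cyc n (i + 4) + 1"
proof -
  have "n - i = (n - (i + 4)) + 4" using assms by simp
  then have "reach (n - i) = reach (n - (i + 4)) + 1" by (metis reach_add4)
  then show ?thesis using reach_add4[of i] unfolding reach_cyc_def by (simp add: min_def)
qed

lemma reach_cyc_left:
  assumes "24 < n" "i \<le> 8"
  shows "reach_cyc n i = reach i"
proof -
  have "reach i \<le> i div 4 + 2" by (rule reach_bounds)
  also have "\<dots> \<le> (n - i) div 4" using assms by simp
  also have "\<dots> \<le> reach (n - i)" by (rule reach_bounds)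
  finally show ?thesis unfolding reach_cyc_def by simp
qed

lemma reach_cyc_right:
  assumes "24 < n" "i < n" "n - i \<le> 8"
  shows "reach_cyc n i = reach (n - i)"
proof -
  have "reach (n - i) \<le> (n - i) div 4 + 2" by (rule reach_bounds)
  also have "\<dots> \<le> i div 4" using assms by simp
  also have "\<dots> \<le> reach i" by (rule reach_bounds)
  finally show ?thesis unfolding reach_cyc_def by simp
qed

lemma reach_cyc_wrap4:
  assumes "24 < n" "i < n" "n \<le> i + 4"
  shows "reach_cyc n (i + 4 - n) \<le> reach_cyc n i + 1 \<and> reach_cyc n i \<le> reach_cyc n (i + 4 - n) + 1"
proof -
  have d: "n - i = 1 \<or> n - i = 2 \<or> n - i = 3 \<or> n - i = 4" using assms by auto
  have "reach_cyc n i = reach (n - i)" using assms by (intro reach_cyc_right) auto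
  moreover have "reach_cyc n (i + 4 - n) = reach (4 - (n - i))"
    using reach_cyc_left[of n "i + 4 - n"] assms by (simp add: add.commute)
  ultimately show ?thesis using d by auto
qed

lemma reach_cyc_le: "i < n \<Longrightarrow> reach_cyc n i \<le> i \<and> reach_cyc n i \<le> n - i"
  unfolding reach_cyc_def using reach_le[of i] reach_le[of "n - i"] by auto

lemma dist_uu_Suc:
  assumes "Suc i < n"
  shows "dist_uu n (Suc i) \<le> dist_uu n i + 1 \<and> dist_uu n i \<le> dist_uu n (Suc i) + 1"
proof -
  have "n - i = Suc (n - Suc i)" using assms by simp
  then show ?thesis unfolding dist_uu_def using reach_cyc_Suc[OF assms] by arith
qed

lemma dist_vv_left:
  assumes "24 < n" "i \<le> 4"
  shows "dist_vv n i = (if i mod 4 = 0 then min (2 + reach i) (i div 4) else 2 + reach i)"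
proof -
  have e: "reach_cyc n i = reach i" using assms by (intro reach_cyc_left) auto
  have "2 + reach i \<le> 4" using reach_le4[OF assms(2)] by simp
  also have "4 \<le> (n - i) div 4" using assms by simp
  finally show ?thesis unfolding dist_vv_def e by (auto simp: min_def)
qed

lemma dist_vv_right:
  assumes "24 < n" "i < n" "n - i \<le> 4"
  shows "dist_vv n i = (if (n - i) mod 4 = 0 then min (2 + reach (n - i)) ((n - i) div 4)
                        else 2 + reach (n - i))"
proof -
  have e: "reach_cyc n i = reach (n - i)" using assms by (intro reach_cyc_right) auto
  have "2 + reach (n - i) \<le> 4" using reach_le4[OF assms(3)] by simp
  also have "4 \<le> i div 4" using assms by simp
  finally show ?thesis unfolding dist_vv_def e by (auto simp: min_def)
qed

lemma min_le_min_Suc: "(x::nat) \<le> x' + 1 \<Longrightarrow> y \<le> y' + 1 \<Longrightarrow> min x y \<le> min x' y' + 1"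
  by (simp add: min_def)

lemma dist_vv_add4:
  assumes "i + 4 < n"
  shows "dist_vv n (i + 4) \<le> dist_vv n i + 1 \<and> dist_vv n i \<le> dist_vv n (i + 4) + 1"
proof -
  have h: "n - i = (n - (i + 4)) + 4" using assms by simp
  have m1: "(n - i) mod 4 = (n - (i + 4)) mod 4" "(n - i) div 4 = (n - (i + 4)) div 4 + 1"
    by (subst h, simp)+
  have m2: "(i + 4) mod 4 = i mod 4" "(i + 4) div 4 = i div 4 + 1" by simp_all
  have G: "reach_cyc n (i + 4) \<le> reach_cyc n i + 1" "reach_cyc n i \<le> reach_cyc n (i + 4) + 1"
    using reach_cyc_add4[OF assms] by auto
  have t1: "(if (i + 4) mod 4 = 0 then (i + 4) div 4 else 2 + reach_cyc n (i + 4))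
      \<le> (if i mod 4 = 0 then i div 4 else 2 + reach_cyc n i) + 1"
    "(if i mod 4 = 0 then i div 4 else 2 + reach_cyc n i)
      \<le> (if (i + 4) mod 4 = 0 then (i + 4) div 4 else 2 + reach_cyc n (i + 4)) + 1"
    using G m2 by auto
  have t2: "(if (n - (i + 4)) mod 4 = 0 then (n - (i + 4)) div 4 else 2 + reach_cyc n (i + 4))
      \<le> (if (n - i) mod 4 = 0 then (n - i) div 4 else 2 + reach_cyc n i) + 1"
    "(if (n - i) mod 4 = 0 then (n - i) div 4 else 2 + reach_cyc n i)
      \<le> (if (n - (i + 4)) mod 4 = 0 then (n - (i + 4)) div 4 else 2 + reach_cyc n (i + 4)) + 1"
    using G m1 by auto
  show ?thesis unfolding dist_vv_def using G t1 t2 by (intro conjI min_le_min_Suc) auto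
qed

lemma dist_vv_wrap4:
  assumes "24 < n" "i < n" "n \<le> i + 4"
  shows "dist_vv n (i + 4 - n) \<le> dist_vv n i + 1 \<and> dist_vv n i \<le> dist_vv n (i + 4 - n) + 1"
proof -
  define d where "d = n - i"
  have j: "i + 4 - n = 4 - d" using assms unfolding d_def by simp
  have d: "d = 1 \<or> d = 2 \<or> d = 3 \<or> d = 4" using assms unfolding d_def by auto
  have "dist_vv n i = (if d mod 4 = 0 then min (2 + reach d) (d div 4) else 2 + reach d)"
    using assms dist_vv_right[of n i] unfolding d_def by auto
  moreover have "dist_vv n (4 - d) =
      (if (4 - d) mod 4 = 0 then min (2 + reach (4 - d)) ((4 - d) div 4) else 2 + reach (4 - d))"
    using assms dist_vv_left[of n "4 - d"] by auto
  ultimately show ?thesis unfolding j using d by auto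
qed

lemma cyclic_lipschitz_dist_uu: "24 < n \<Longrightarrow> cyclic_lipschitz n 1 (dist_uu n)"
proof (rule cyclic_lipschitzI)
  show "dist_uu n (i + 1 - n) \<le> dist_uu n i + 1 \<and> dist_uu n i \<le> dist_uu n (i + 1 - n) + 1"
    if "i < n" "n \<le> i + 1" for i
  proof -
    have "i + 1 - n = 0" "n - i = 1" using that by auto
    then show ?thesis by (simp add: dist_uu_def)
  qed
qed (use dist_uu_Suc in auto)

lemma cyclic_lipschitz_dist_uv_1: "24 < n \<Longrightarrow> cyclic_lipschitz n 1 (dist_uv n)"
proof (rule cyclic_lipschitzI)
  assume n: "24 < n"
  show "dist_uv n (i + 1 - n) \<le> dist_uv n i + 1 \<and> dist_uv n i \<le> dist_uv n (i + 1 - n) + 1"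
    if "i < n" "n \<le> i + 1" for i
  proof -
    have "i + 1 - n = 0" "n - i = 1" using that by auto
    then show ?thesis
      using that reach_cyc_right[OF n, of i] by (simp add: dist_uv_def reach_cyc_def)
  qed
qed (use reach_cyc_Suc in \<open>auto simp: dist_uv_def\<close>)

lemma cyclic_lipschitz_dist_uv_4: "24 < n \<Longrightarrow> cyclic_lipschitz n 4 (dist_uv n)"
  by (rule cyclic_lipschitzI) (auto simp: dist_uv_def dest: reach_cyc_add4 reach_cyc_wrap4)

lemma cyclic_lipschitz_dist_vv: "24 < n \<Longrightarrow> cyclic_lipschitz n 4 (dist_vv n)"
  by (rule cyclic_lipschitzI) (auto dest: dist_vv_add4 dist_vv_wrap4)

lemma dist_uu_uv_close: "i < n \<Longrightarrow> dist_uu n i \<le> dist_uv n i + 1 \<and> dist_uv n i \<le> dist_uu n i + 1"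
  using reach_cyc_le[of i n] unfolding dist_uu_def dist_uv_def by auto

lemma dist_uv_vv_close: "dist_uv n i \<le> dist_vv n i + 1 \<and> dist_vv n i \<le> dist_uv n i + 1"
proof -
  have "i mod 4 = 0 \<Longrightarrow> reach_cyc n i \<le> i div 4"
    unfolding reach_cyc_def using reach_dvd4[of i] by simp
  moreover have "(n - i) mod 4 = 0 \<Longrightarrow> reach_cyc n i \<le> (n - i) div 4"
    unfolding reach_cyc_def using reach_dvd4[of "n - i"] by simp
  ultimately show ?thesis unfolding dist_uv_def dist_vv_def by auto
qed

lemma reach_cyc_pred4_lt_left:
  assumes "24 < n" "3 \<le> i" "i < n"
  shows "reach_cyc n ((i + (n - 4)) mod n) < reach i"
proof (cases "i = 3")
  case True
  then have "(i + (n - 4)) mod n = n - 1" using mod_add_diff[of i n 4] assms by simp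
  then show ?thesis using True assms(1) by (simp add: reach_cyc_def)
next
  case False
  then have "(i + (n - 4)) mod n = i - 4" "i = (i - 4) + 4"
    using mod_add_diff[of i n 4] assms by simp_all
  then show ?thesis using reach_add4[of "i - 4"] by (simp add: reach_cyc_def)
qed

lemma reach_cyc_succ4_lt_right:
  assumes "24 < n" "3 \<le> n - i" "i < n"
  shows "reach_cyc n ((i + 4) mod n) < reach (n - i)"
proof -
  consider "n - i = 3" | "n - i = 4" | "4 < n - i" using assms(2) by linarith
  then show ?thesis
  proof cases
    case 1
    then have "i + 4 = 1 + n" using assms(3) by linarith
    then have "(i + 4) mod n = 1" using assms(1) by (simp only: mod_add_self2) simp
    then show ?thesis using 1 by (simp add: reach_cyc_def)
  next
    case 2
    then have "i + 4 = n" using assms(3) by linarith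
    then have "(i + 4) mod n = 0" by (metis mod_self)
    then show ?thesis using 2 by (simp add: reach_cyc_def)
  next
    case 3
    define m where "m = n - (i + 4)"
    have "(i + 4) mod n = i + 4" "n - (i + 4) = m" "n - i = m + 4" using 3 by (simp_all add: m_def)
    then have "reach_cyc n ((i + 4) mod n) \<le> reach m" by (simp add: reach_cyc_def)
    also have "\<dots> < reach (n - i)" using \<open>n - i = m + 4\<close> reach_add4[of m] by simp
    finally show ?thesis .
  qed
qed

lemma reach_pred_up:
  assumes "k mod 4 = 1 \<or> k mod 4 = 2"
  shows "reach k = reach (k - 1) + 1"
proof (cases k)
  case (Suc j)
  then have "j mod 4 = 0 \<or> j mod 4 = 1" using assms by (auto simp: mod_Suc split: if_splits)
  then show ?thesis using reach_Suc_up Suc by simp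
qed (use assms in simp)

lemma reach_cyc_pred1_lt_left:
  assumes "i mod 4 = 1 \<or> i mod 4 = 2" "i < n"
  shows "reach_cyc n ((i + (n - 1)) mod n) < reach i"
proof -
  have "0 < i" using assms(1) by (cases i) auto
  then have "(i + (n - 1)) mod n = i - 1" using mod_add_diff[of i n 1] assms(2) by simp
  then show ?thesis using reach_pred_up[OF assms(1)] by (simp add: reach_cyc_def)
qed

lemma reach_cyc_succ1_lt_left:
  assumes "i mod 4 = 3" "i < n"
  shows "reach_cyc n ((i + 1) mod n) < reach i"
proof (cases "Suc i < n")
  case True
  then show ?thesis using reach_Suc_down[OF assms(1)] by (simp add: reach_cyc_def)
next
  case False
  then have "Suc i = n" using assms(2) by simp
  then have "(i + 1) mod n = 0" by simp
  then show ?thesis using reach_pos[of i] assms(1) by (simp add: reach_cyc_def)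
qed

lemma reach_cyc_succ1_lt_right:
  assumes "(n - i) mod 4 = 1 \<or> (n - i) mod 4 = 2" "i < n"
  shows "reach_cyc n ((i + 1) mod n) < reach (n - i)"
proof (cases "Suc i < n")
  case True
  define m where "m = n - i"
  have "(i + 1) mod n = Suc i" "n - Suc i = m - 1" using True by (simp_all add: m_def)
  then show ?thesis using reach_pred_up[OF assms(1)] unfolding m_def[symmetric]
    by (simp add: reach_cyc_def)
next
  case False
  then have "Suc i = n" using assms(2) by simp
  then have "(i + 1) mod n = 0" "n - i = 1" by simp_all
  then show ?thesis by (simp add: reach_cyc_def)
qed

lemma reach_cyc_pred1_lt_right:
  assumes "(n - i) mod 4 = 3" "0 < i" "i < n"
  shows "reach_cyc n ((i + (n - 1)) mod n) < reach (n - i)"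
proof -
  define m where "m = n - i"
  have "(i + (n - 1)) mod n = i - 1" "n - (i - 1) = Suc m"
    using mod_add_diff[of i n 1] assms(2,3) by (simp_all add: m_def)
  then show ?thesis using reach_Suc_down[OF assms(1)] unfolding m_def[symmetric]
    by (simp add: reach_cyc_def)
qed

lemma reach_cyc_cases: "reach_cyc n i = reach i \<or> reach_cyc n i = reach (n - i)"
  by (simp add: reach_cyc_def min_def)

lemma dist_uu_descent:
  assumes "0 < i" "i < n"
  shows "dist_uu n ((i + 1) mod n) < dist_uu n i \<or> dist_uu n ((i + (n - 1)) mod n) < dist_uu n i
    \<or> dist_uv n i < dist_uu n i"
proof -
  have "(i + (n - 1)) mod n = i - 1" using mod_add_diff[of i n 1] assms by simp
  then have "dist_uu n ((i + (n - 1)) mod n) < i" using assms(1) by (simp add: dist_uu_def)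
  moreover have "dist_uu n ((i + 1) mod n) < n - i"
  proof (cases "Suc i < n")
    case False
    then have "Suc i = n" using assms(2) by simp
    then show ?thesis by (simp add: dist_uu_def)
  qed (simp add: dist_uu_def)
  moreover have "dist_uv n i < 2 + reach_cyc n i" by (simp add: dist_uv_def)
  moreover have "dist_uu n i = min (min i (n - i)) (2 + reach_cyc n i)" by (rule dist_uu_def)
  ultimately show ?thesis by (auto simp: min_def)
qed

lemma dist_uv_descent_to_u0:
  assumes "24 < n" "i < n"
  shows "dist_uv n ((i + 4) mod n) < dist_uv n i \<or> dist_uv n ((i + (n - 4)) mod n) < dist_uv n i
    \<or> dist_uu n i < dist_uv n i"
proof (cases "i = 0")
  case True
  then show ?thesis by (simp add: dist_uu_def dist_uv_def)
next
  case False
  consider "reach_cyc n i = reach i" | "reach_cyc n i = reach (n - i)"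
    using reach_cyc_cases by blast
  then show ?thesis
  proof cases
    case 1
    show ?thesis
    proof (cases "i \<le> 2")
      case True
      then have "i = 1 \<or> i = 2" using False by auto
      then have "dist_uu n i \<le> reach i" by (auto simp: dist_uu_def)
      then show ?thesis using 1 by (simp add: dist_uv_def)
    next
      case False
      then show ?thesis using 1 reach_cyc_pred4_lt_left[OF assms(1) _ assms(2)]
        by (simp add: dist_uv_def)
    qed
  next
    case 2
    show ?thesis
    proof (cases "n - i \<le> 2")
      case True
      then have "n - i = 1 \<or> n - i = 2" using assms(2) by auto
      then have "dist_uu n i \<le> reach (n - i)" by (auto simp: dist_uu_def)
      then show ?thesis using 2 by (simp add: dist_uv_def)
    next
      case False
      then show ?thesis using 2 reach_cyc_succ4_lt_right[OF assms(1) _ assms(2)]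
        by (simp add: dist_uv_def)
    qed
  qed
qed

lemma dist_vv_le_div4: "j mod 4 = 0 \<Longrightarrow> dist_vv n j \<le> j div 4"
  by (simp add: dist_vv_def min_le_iff_disj)

lemma dist_vv_le_compl_div4: "(n - j) mod 4 = 0 \<Longrightarrow> dist_vv n j \<le> (n - j) div 4"
  by (simp add: dist_vv_def min_le_iff_disj)

lemma dist_uv_descent_to_v0:
  assumes "i < n"
  shows "dist_uv n ((i + 1) mod n) < dist_uv n i \<or> dist_uv n ((i + (n - 1)) mod n) < dist_uv n i
    \<or> dist_vv n i < dist_uv n i"
proof (cases "i = 0")
  case True
  then show ?thesis by (simp add: dist_vv_def dist_uv_def)
next
  case False
  have mod4: "m mod 4 = 0 \<or> (m mod 4 = 1 \<or> m mod 4 = 2) \<or> m mod 4 = 3" for m :: nat by auto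
  consider "reach_cyc n i = reach i" | "reach_cyc n i = reach (n - i)"
    using reach_cyc_cases by blast
  then show ?thesis
  proof cases
    case 1
    then show ?thesis
      using mod4[of i] dist_vv_le_div4[of i n] reach_dvd4[of i]
        reach_cyc_pred1_lt_left[OF _ assms] reach_cyc_succ1_lt_left[OF _ assms]
      by (auto simp: dist_uv_def)
  next
    case 2
    then show ?thesis
      using mod4[of "n - i"] dist_vv_le_compl_div4[of n i] reach_dvd4[of "n - i"]
        reach_cyc_succ1_lt_right[OF _ assms] reach_cyc_pred1_lt_right[OF _ _ assms] False
      by (auto simp: dist_uv_def)
  qed
qed

lemma dist_vv_descent:
  assumes "0 < i" "i < n"
  shows "dist_vv n ((i + 4) mod n) < dist_vv n i \<or> dist_vv n ((i + (n - 4)) mod n) < dist_vv n i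
    \<or> dist_uv n i < dist_vv n i"
proof -
  have "dist_vv n i = 2 + reach_cyc n i \<or> (i mod 4 = 0 \<and> dist_vv n i = i div 4)
    \<or> ((n - i) mod 4 = 0 \<and> dist_vv n i = (n - i) div 4)"
    unfolding dist_vv_def by (simp add: min_def)
  then consider "dist_vv n i = 2 + reach_cyc n i"
    | "i mod 4 = 0" "dist_vv n i = i div 4"
    | "(n - i) mod 4 = 0" "dist_vv n i = (n - i) div 4"
    by metis
  then show ?thesis
  proof cases
    case 1
    then show ?thesis by (simp add: dist_uv_def)
  next
    case 2
    have "4 \<le> i" using 2(1) assms(1) by presburger
    then obtain j where j: "i = j + 4" using le_Suc_ex by (metis add.commute)
    have pred: "(i + (n - 4)) mod n = j" using mod_add_diff[of i n 4] assms(2) j by simp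
    have "dist_vv n j \<le> j div 4" using 2(1) j by (intro dist_vv_le_div4) simp
    moreover have "i div 4 = j div 4 + 1" using j by simp
    ultimately have "dist_vv n ((i + (n - 4)) mod n) < dist_vv n i" unfolding pred 2(2) by linarith
    then show ?thesis by blast
  next
    case 3
    have "4 \<le> n - i" using 3(1) assms(2) by presburger
    then obtain j where j: "n - i = j + 4" using le_Suc_ex by (metis add.commute)
    show ?thesis
    proof (cases "j = 0")
      case True
      then have "i + 4 = n" using j assms(2) by linarith
      then have "dist_vv n ((i + 4) mod n) = 0" by (simp add: dist_vv_def)
      moreover have "dist_vv n i = 1" using 3(2) j True by simp
      ultimately show ?thesis by simp
    next
      case False
      then have succ: "(i + 4) mod n = i + 4" and rest: "n - (i + 4) = j" using j by simp_all
      have "dist_vv n (i + 4) \<le> j div 4"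
        using 3(1) j rest dist_vv_le_compl_div4[of n "i + 4"] by simp
      moreover have "(n - i) div 4 = j div 4 + 1" using j by simp
      ultimately have "dist_vv n ((i + 4) mod n) < dist_vv n i" unfolding succ 3(2) by linarith
      then show ?thesis by blast
    qed
  qed
qed

definition dist_u0 :: "nat \<Rightarrow> bool \<times> nat \<Rightarrow> nat" where
  "dist_u0 n = gp_potential (dist_uu n) (dist_uv n)"

definition dist_v0 :: "nat \<Rightarrow> bool \<times> nat \<Rightarrow> nat" where
  "dist_v0 n = gp_potential (dist_uv n) (dist_vv n)"

lemma distance_potential_u0:
  assumes n: "24 < n"
  shows "distance_potential (gp_verts n) (gp_adj n 4) (False, 0) (dist_u0 n)"
  unfolding dist_u0_def
proof (rule distance_potential_gp_potential)
  show "(False, 0) \<in> gp_verts n" "4 \<le> n" using n by (simp_all add: gp_verts_def)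
  show "gp_potential (dist_uu n) (dist_uv n) (False, 0) = 0" by (simp add: dist_uu_def)
  show "cyclic_lipschitz n 1 (dist_uu n)" "cyclic_lipschitz n 4 (dist_uv n)"
    using n by (rule cyclic_lipschitz_dist_uu cyclic_lipschitz_dist_uv_4)+
  show "dist_uu n i \<le> dist_uv n i + 1 \<and> dist_uv n i \<le> dist_uu n i + 1" if "i < n" for i
    using that by (rule dist_uu_uv_close)
  show "dist_uu n ((i + 1) mod n) < dist_uu n i \<or> dist_uu n ((i + (n - 1)) mod n) < dist_uu n i
      \<or> dist_uv n i < dist_uu n i" if "i < n" "(False, i) \<noteq> (False, 0)" for i
    using that by (intro dist_uu_descent) auto
  show "dist_uv n ((i + 4) mod n) < dist_uv n i \<or> dist_uv n ((i + (n - 4)) mod n) < dist_uv n i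
      \<or> dist_uu n i < dist_uv n i" if "i < n" for i
    using n that by (rule dist_uv_descent_to_u0)
qed

lemma distance_potential_v0:
  assumes n: "24 < n"
  shows "distance_potential (gp_verts n) (gp_adj n 4) (True, 0) (dist_v0 n)"
  unfolding dist_v0_def
proof (rule distance_potential_gp_potential)
  show "(True, 0) \<in> gp_verts n" "4 \<le> n" using n by (simp_all add: gp_verts_def)
  show "gp_potential (dist_uv n) (dist_vv n) (True, 0) = 0" by (simp add: dist_vv_def)
  show "cyclic_lipschitz n 1 (dist_uv n)" "cyclic_lipschitz n 4 (dist_vv n)"
    using n by (rule cyclic_lipschitz_dist_uv_1 cyclic_lipschitz_dist_vv)+
  show "dist_uv n i \<le> dist_vv n i + 1 \<and> dist_vv n i \<le> dist_uv n i + 1" for i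
    by (rule dist_uv_vv_close)
  show "dist_uv n ((i + 1) mod n) < dist_uv n i \<or> dist_uv n ((i + (n - 1)) mod n) < dist_uv n i
      \<or> dist_vv n i < dist_uv n i" if "i < n" for i
    using that by (rule dist_uv_descent_to_v0)
  show "dist_vv n ((i + 4) mod n) < dist_vv n i \<or> dist_vv n ((i + (n - 4)) mod n) < dist_vv n i
      \<or> dist_uv n i < dist_vv n i" if "i < n" "(True, i) \<noteq> (True, 0)" for i
    using that by (intro dist_vv_descent) auto
qed

lemma distance_potential_v4:
  assumes n: "24 < n"
  shows "distance_potential (gp_verts n) (gp_adj n 4) (True, 4) (dist_v0 n \<circ> gp_rot n (n - 4))"
proof -
  have "(4 + (n - 4)) mod n = 0" "((n - 4) + 4) mod n = 0" using n by simp_all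
  then have "distance_potential (gp_verts n) (gp_adj n 4) (gp_rot n 4 (True, 0))
      (dist_v0 n \<circ> gp_rot n (n - 4))"
    using n by (intro distance_potential_automorphism[OF distance_potential_v0[OF n]])
      (simp_all add: gp_rot_in_verts gp_adj_rot gp_rot_rot)
  then show ?thesis using n by (simp add: gp_rot_def)
qed

section \<open>Counting the vertices closer to \<open>u\<^sub>0\<close> or to \<open>v\<^sub>4\<close>\<close>

definition vote :: "nat \<Rightarrow> nat \<Rightarrow> int" where
  "vote dx dy = of_bool (dx < dy) - of_bool (dy < dx)"

lemma card_less_diff_eq_sum_vote:
  fixes f g :: "'a \<Rightarrow> nat"
  assumes "finite A"
  shows "int (card {a \<in> A. f a < g a}) - int (card {a \<in> A. g a < f a}) = (\<Sum>a\<in>A. vote (f a) (g a))"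
  using assms by (simp add: vote_def sum_subtractf Int_def conj_commute)

lemma sum_gp_verts: "(\<Sum>w\<in>gp_verts n. F w) = (\<Sum>i<n. F (False, i) + F (True, i))"
proof -
  have "gp_verts n = UNIV \<times> {..<n}" by (auto simp: gp_verts_def)
  then show ?thesis by (simp add: sum.cartesian_product' UNIV_bool sum.distrib)
qed

text \<open>The votes of \<open>u\<^sub>i\<close> and \<open>v\<^sub>i\<close>; their distance to \<open>v\<^sub>4\<close> is the distance to \<open>v\<^sub>0\<close> of the
  vertex with index \<open>i - 4\<close> (mod \<open>n\<close>).\<close>

definition balance :: "nat \<Rightarrow> nat \<Rightarrow> int" where
  "balance n i = vote (dist_uu n i) (dist_uv n ((i + (n - 4)) mod n))
     + vote (dist_uv n i) (dist_vv n ((i + (n - 4)) mod n))"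

lemma card_W_set_diff_eq_sum_balance:
  assumes n: "24 < n"
  shows "int (card (W_set (gp_verts n) (gp_adj n 4) (False, 0) (True, 4)))
    - int (card (W_set (gp_verts n) (gp_adj n 4) (True, 4) (False, 0))) = (\<Sum>i<n. balance n i)"
proof -
  let ?fx = "dist_u0 n" and ?fy = "dist_v0 n \<circ> gp_rot n (n - 4)"
  have "W_set (gp_verts n) (gp_adj n 4) (False, 0) (True, 4) = {w \<in> gp_verts n. ?fx w < ?fy w}"
    "W_set (gp_verts n) (gp_adj n 4) (True, 4) (False, 0) = {w \<in> gp_verts n. ?fy w < ?fx w}"
    unfolding W_set_def
    using gdist_eq_distance_potential[OF distance_potential_u0[OF n]]
      gdist_eq_distance_potential[OF distance_potential_v4[OF n]]
    by auto
  moreover have "finite (gp_verts n)"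
    by (rule finite_subset[of _ "UNIV \<times> {..<n}"]) (auto simp: gp_verts_def)
  ultimately show ?thesis
    by (simp add: card_less_diff_eq_sum_vote sum_gp_verts balance_def dist_u0_def dist_v0_def
        gp_rot_def)
qed

definition pair_balance :: "nat \<Rightarrow> nat \<Rightarrow> bool \<Rightarrow> bool \<Rightarrow> int" where
  "pair_balance a b da db =
     vote (2 + min a b) (1 + min (a - 1) (b + 1))
   + vote (1 + min a b) (min (2 + min (a - 1) (b + 1))
       (min (if da then a - 1 else 2 + min (a - 1) (b + 1))
            (if db then b + 1 else 2 + min (a - 1) (b + 1))))
   + vote (2 + min b a) (1 + min (b - 1) (a + 1))
   + vote (1 + min b a) (min (2 + min (b - 1) (a + 1))
       (min (if db then b - 1 else 2 + min (b - 1) (a + 1))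
            (if da then a + 1 else 2 + min (b - 1) (a + 1))))"

lemma pair_balance_le:
  assumes "1 \<le> a" "1 \<le> b"
  shows "pair_balance a b da db \<le> 0 \<and> (da \<longrightarrow> a + 2 \<le> b \<longrightarrow> pair_balance a b da db \<le> -2)"
proof -
  consider "a + 2 \<le> b" | "a + 1 = b" | "a = b" | "b + 1 = a" | "b + 2 \<le> a" by linarith
  then show ?thesis
  proof cases
    case 1
    then have e: "min a b = a" "min b a = a" "min (a - 1) (b + 1) = a - 1"
      "min (b - 1) (a + 1) = a + 1"
      using assms by auto
    show ?thesis using 1 assms unfolding pair_balance_def e
      by (cases da; cases db) (auto simp: vote_def min_def)
  next
    case 2
    then have e: "min a b = a" "min b a = a" "min (a - 1) (b + 1) = a - 1"
      "min (b - 1) (a + 1) = a"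
      using assms by auto
    show ?thesis using 2 assms unfolding pair_balance_def e
      by (cases da; cases db) (auto simp: vote_def min_def)
  next
    case 3
    then have e: "min a b = a" "min b a = a" "min (a - 1) (b + 1) = a - 1"
      "min (b - 1) (a + 1) = a - 1"
      using assms by auto
    show ?thesis using 3 assms unfolding pair_balance_def e
      by (cases da; cases db) (auto simp: vote_def min_def)
  next
    case 4
    then have e: "min a b = b" "min b a = b" "min (a - 1) (b + 1) = b"
      "min (b - 1) (a + 1) = b - 1"
      using assms by auto
    show ?thesis using 4 assms unfolding pair_balance_def e
      by (cases da; cases db) (auto simp: vote_def min_def)
  next
    case 5
    then have e: "min a b = b" "min b a = b" "min (a - 1) (b + 1) = b + 1"
      "min (b - 1) (a + 1) = b - 1"
      using assms by auto
    show ?thesis using 5 assms unfolding pair_balance_def e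
      by (cases da; cases db) (auto simp: vote_def min_def)
  qed
qed

lemma dist_vv_eq_reach:
  "dist_vv n j = min (2 + reach_cyc n j)
     (min (if j mod 4 = 0 then reach j else 2 + reach_cyc n j)
          (if (n - j) mod 4 = 0 then reach (n - j) else 2 + reach_cyc n j))"
  unfolding dist_vv_def using reach_dvd4[of j] reach_dvd4[of "n - j"] by simp

lemma balance_pair_eq:
  assumes n: "24 < n" and i: "i = j + 4" and k: "n - i = k + 4"
  shows "balance n i + balance n (n - i)
    = pair_balance (reach i) (reach (n - i)) (i mod 4 = 0) ((n - i) mod 4 = 0)"
proof -
  have nn: "n = j + k + 8" using i k by simp
  have s1: "(i + (n - 4)) mod n = j" using mod_add_diff[of i n 4] nn i by simp
  have s2: "(n - i + (n - 4)) mod n = k"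
  proof -
    have e: "n - i + (n - 4) = k + n" using k nn by simp
    have "k < n" using nn by simp
    then show ?thesis by (simp only: e mod_add_self2) simp
  qed
  have ga: "reach i = reach j + 1" using i reach_add4 by simp
  have gb: "reach (n - i) = reach k + 1" using k reach_add4 by simp
  have e1: "n - j = (n - i) + 4" using i k by simp
  have gnj: "reach (n - j) = reach (n - i) + 1" by (simp only: e1 reach_add4)
  have e2: "n - k = i + 4" using i k by simp
  have gnk: "reach (n - k) = reach i + 1" by (simp only: e2 reach_add4)
  have nni: "n - (n - i) = i" using nn i by simp
  have mj: "j mod 4 = i mod 4" "(n - j) mod 4 = (n - i) mod 4"
    unfolding i e1 mod_add_self2 by simp_all
  have mk: "k mod 4 = (n - i) mod 4" "(n - k) mod 4 = i mod 4"
    unfolding k e2 mod_add_self2 by simp_all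
  have Ci: "reach_cyc n i = min (reach i) (reach (n - i))" by (simp add: reach_cyc_def)
  have Cni: "reach_cyc n (n - i) = min (reach (n - i)) (reach i)" by (simp add: reach_cyc_def nni)
  have Cj: "reach_cyc n j = min (reach i - 1) (reach (n - i) + 1)"
    by (simp add: reach_cyc_def ga gnj)
  have Ck: "reach_cyc n k = min (reach (n - i) - 1) (reach i + 1)"
    by (simp add: reach_cyc_def gb gnk)
  have le: "reach i + 2 \<le> i" "reach (n - i) + 2 \<le> n - i" using reach_add2_le i k by auto
  have Ui: "dist_uu n i = 2 + min (reach i) (reach (n - i))"
    unfolding dist_uu_def Ci using le by simp
  have Uni: "dist_uu n (n - i) = 2 + min (reach (n - i)) (reach i)"
    unfolding dist_uu_def Cni nni using le by simp
  have Vj: "dist_vv n j = min (2 + min (reach i - 1) (reach (n - i) + 1))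
      (min (if i mod 4 = 0 then reach i - 1 else 2 + min (reach i - 1) (reach (n - i) + 1))
           (if (n - i) mod 4 = 0 then reach (n - i) + 1
            else 2 + min (reach i - 1) (reach (n - i) + 1)))"
    unfolding dist_vv_eq_reach[of n j] Cj mj gnj using ga by simp
  have Vk: "dist_vv n k = min (2 + min (reach (n - i) - 1) (reach i + 1))
      (min (if (n - i) mod 4 = 0 then reach (n - i) - 1
            else 2 + min (reach (n - i) - 1) (reach i + 1))
           (if i mod 4 = 0 then reach i + 1 else 2 + min (reach (n - i) - 1) (reach i + 1)))"
    unfolding dist_vv_eq_reach[of n k] Ck mk gnk using gb by simp
  show ?thesis
    unfolding balance_def s1 s2 Ui Uni Vj Vk dist_uv_def Ci Cni Cj Ck pair_balance_def
    by (simp only: add.assoc)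
qed

lemma balance_pair_le:
  assumes n: "24 < n" and i: "4 \<le> i" "i + 4 \<le> n"
  shows "balance n i + balance n (n - i) \<le> 0
    \<and> (i mod 4 = 0 \<longrightarrow> reach i + 2 \<le> reach (n - i) \<longrightarrow> balance n i + balance n (n - i) \<le> -2)"
proof -
  have "balance n i + balance n (n - i)
      = pair_balance (reach i) (reach (n - i)) (i mod 4 = 0) ((n - i) mod 4 = 0)"
    by (rule balance_pair_eq[OF n, of i "i - 4" "n - i - 4"]) (use i in auto)
  moreover have "1 \<le> reach i" "1 \<le> reach (n - i)"
    using reach_pos[of i] reach_pos[of "n - i"] i by auto
  ultimately show ?thesis using pair_balance_le by presburger
qed

lemma balance_ends:
  assumes n: "56 \<le> n"
  shows "balance n 0 = 1" "balance n 1 + balance n (n - 1) = 4"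
    "balance n 2 + balance n (n - 2) = 4" "balance n 3 + balance n (n - 3) = 1"
proof -
  have n': "24 < n" using n by simp
  have sh: "((0::nat) + (n - 4)) mod n = n - 4" "(1 + (n - 4)) mod n = n - 3"
    "(2 + (n - 4)) mod n = n - 2" "(3 + (n - 4)) mod n = n - 1"
    using mod_add_diff[of 0 n 4] mod_add_diff[of 1 n 4] mod_add_diff[of 2 n 4]
      mod_add_diff[of 3 n 4] n
    by simp_all
  have sh_d: "(n - d + (n - 4)) mod n = n - (d + 4)" if "1 \<le> d" "d \<le> 3" for d
    using mod_add_diff[of "n - d" n 4] that n by simp
  have sh': "(n - 1 + (n - 4)) mod n = n - 5" "(n - 2 + (n - 4)) mod n = n - 6"
    "(n - 3 + (n - 4)) mod n = n - 7"
    using sh_d[of 1] sh_d[of 2] sh_d[of 3] by simp_all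
  have uv_l: "dist_uv n d = 1 + reach d" if "d \<le> 8" for d
    using reach_cyc_left[OF n' that] by (simp add: dist_uv_def)
  have uv_r: "dist_uv n (n - d) = 1 + reach d" if "1 \<le> d" "d \<le> 8" for d
    using reach_cyc_right[OF n', of "n - d"] that n by (simp add: dist_uv_def)
  have uu_l: "dist_uu n d = min d (2 + reach d)" if "d \<le> 8" for d
    using reach_cyc_left[OF n' that] that n by (simp add: dist_uu_def)
  have uu_r: "dist_uu n (n - d) = min d (2 + reach d)" if "1 \<le> d" "d \<le> 8" for d
    using reach_cyc_right[OF n', of "n - d"] that n by (simp add: dist_uu_def)
  have vv_r:
    "dist_vv n (n - d) = (if d mod 4 = 0 then min (2 + reach d) (d div 4) else 2 + reach d)"
    if "1 \<le> d" "d \<le> 8" for d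
  proof -
    have "2 + reach d \<le> 6" using reach_bounds(2)[of d] that by simp
    also have "6 \<le> (n - d) div 4" using n that by simp
    finally show ?thesis using reach_cyc_right[OF n', of "n - d"] that n
      by (auto simp: dist_vv_def min_def)
  qed
  show "balance n 0 = 1" unfolding balance_def sh sh'
    using uu_l[of 0] uv_r[of 4] uv_l[of 0] vv_r[of 4] by (simp add: vote_def)
  show "balance n 1 + balance n (n - 1) = 4" unfolding balance_def sh sh'
    using uu_l[of 1] uv_r[of 3] uv_l[of 1] vv_r[of 3] uu_r[of 1] uv_r[of 5] uv_r[of 1] vv_r[of 5]
    by (simp add: vote_def reach_def)
  show "balance n 2 + balance n (n - 2) = 4" unfolding balance_def sh sh'
    using uu_l[of 2] uv_r[of 2] uv_l[of 2] vv_r[of 2] uu_r[of 2] uv_r[of 6] vv_r[of 6]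
    by (simp add: vote_def reach_def)
  show "balance n 3 + balance n (n - 3) = 1" unfolding balance_def sh sh'
    using uu_l[of 3] uv_r[of 1] uv_l[of 3] vv_r[of 1] uu_r[of 3] uv_r[of 7] uv_r[of 3] vv_r[of 7]
    by (simp add: vote_def reach_def)
qed

lemma sum_lessThan_reflect:
  fixes f :: "nat \<Rightarrow> 'a::comm_monoid_add"
  shows "(\<Sum>i<n. f ((n - i) mod n)) = (\<Sum>i<n. f i)"
proof -
  have "(n - (n - i) mod n) mod n = i" if "i < n" for i
    using that by (cases "i = 0") (simp_all add: mod_if)
  then show ?thesis
    by (intro sum.reindex_bij_witness[of _ "\<lambda>i. (n - i) mod n" "\<lambda>i. (n - i) mod n"]) auto
qed

lemma sum_balance_neg_large:
  assumes n: "56 \<le> n"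
  shows "(\<Sum>i<n. balance n i) < 0"
proof -
  define q where "q i = balance n i + balance n ((n - i) mod n)" for i
  have double: "2 * (\<Sum>i<n. balance n i) = (\<Sum>i<n. q i)"
    unfolding q_def sum.distrib sum_lessThan_reflect[of "balance n"] by simp
  have q_eq: "q k = balance n k + balance n (n - k)" if "1 \<le> k" "k < n" for k
    using that by (simp add: q_def)
  define L :: "nat set" where "L = {1..24}"
  define A where "A = {0} \<union> L \<union> (\<lambda>k. n - k) ` L"
  have L_bounds: "1 \<le> k \<and> k \<le> 24" if "k \<in> L" for k using that by (simp add: L_def)
  have "(\<Sum>i<n. q i) \<le> (\<Sum>i\<in>A. q i)"
  proof -
    have sub: "A \<subseteq> {..<n}" using n by (auto simp: A_def L_def)
    have off: "q i \<le> 0" if "i \<in> {..<n} - A" for i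
    proof -
      have i: "i < n" "i \<noteq> 0" "i \<notin> L" "i \<notin> (\<lambda>k. n - k) ` L"
        using that by (auto simp: A_def)
      have "n - i \<notin> L" using i(1,4) image_eqI[of i "\<lambda>k. n - k" "n - i" L] by auto
      then have "4 \<le> i" "i + 4 \<le> n" using i by (auto simp: L_def)
      then show ?thesis using balance_pair_le[of n i] q_eq[of i] n by simp
    qed
    have "(\<Sum>i<n. q i) = (\<Sum>i\<in>{..<n} - A. q i) + (\<Sum>i\<in>A. q i)"
      by (rule sum.subset_diff[OF sub]) simp
    moreover have "(\<Sum>i\<in>{..<n} - A. q i) \<le> 0" by (rule sum_nonpos) (rule off)
    ultimately show ?thesis by simp
  qed
  also have "(\<Sum>i\<in>A. q i) = q 0 + 2 * (\<Sum>k\<in>L. q k)"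
  proof -
    have "0 \<notin> L \<union> (\<lambda>k. n - k) ` L" using L_bounds n by force
    moreover have "L \<inter> (\<lambda>k. n - k) ` L = {}"
    proof (rule equals0I)
      fix x assume "x \<in> L \<inter> (\<lambda>k. n - k) ` L"
      then obtain k where "x \<in> L" "k \<in> L" "x = n - k" by auto
      then show False using L_bounds[of x] L_bounds[of k] n by linarith
    qed
    moreover have "inj_on (\<lambda>k. n - k) L" unfolding inj_on_def using L_bounds n by force
    moreover have "q (n - k) = q k" if "k \<in> L" for k
    proof -
      have k: "1 \<le> k" "k < n" "1 \<le> n - k" "n - k < n" using L_bounds[OF that] n by auto
      then show ?thesis using q_eq[OF k(1,2)] q_eq[OF k(3,4)] by simp
    qed
    ultimately show ?thesis
      by (simp add: A_def L_def sum.union_disjoint sum.reindex)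
  qed
  also have "\<dots> \<le> 2 + 2 * (-3)"
  proof -
    define bound :: "nat \<Rightarrow> int" where
      "bound k = (if k \<le> 2 then 4 else if k = 3 then 1 else if k mod 4 = 0 then -2 else 0)" for k
    have "q k \<le> bound k" if "k \<in> L" for k
    proof -
      have k: "1 \<le> k" "k \<le> 24" using L_bounds[OF that] by auto
      show ?thesis
      proof (cases "k \<le> 3")
        case True
        then have "k = 1 \<or> k = 2 \<or> k = 3" using k by auto
        then show ?thesis using balance_ends[OF n] q_eq[of k] n by (auto simp: bound_def)
      next
        case False
        have "reach k + 2 \<le> reach (n - k)" if "k mod 4 = 0"
        proof -
          have "(k + 8) div 4 \<le> (n - k) div 4" using n k by (intro div_le_mono) simp
          then show ?thesis using reach_dvd4[OF that] reach_bounds(1)[of "n - k"] by simp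
        qed
        then show ?thesis
          using balance_pair_le[of n k] q_eq[of k] False k n by (auto simp: bound_def)
      qed
    qed
    then have "(\<Sum>k\<in>L. q k) \<le> (\<Sum>k\<in>L. bound k)" by (rule sum_mono)
    also have "(\<Sum>k\<in>L. bound k) = -3" unfolding L_def bound_def by code_simp
    finally have "(\<Sum>k\<in>L. q k) \<le> -3" .
    moreover have "q 0 = 2" using balance_ends(1)[OF n] by (simp add: q_def)
    ultimately show ?thesis by simp
  qed
  finally show ?thesis using double by linarith
qed

lemma sum_balance_neg_small:
  assumes "24 < n" "n < 56"
  shows "(\<Sum>i<n. balance n i) < 0"
proof -
  have "list_all (\<lambda>n. sum_list (map (balance n) [0..<n]) < 0) [25..<56]"
    by code_simp
  moreover have "n \<in> set [25..<56]" unfolding set_upt using assms by simp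
  ultimately have "sum_list (map (balance n) [0..<n]) < 0" unfolding list_all_iff by blast
  then show ?thesis by (simp add: interv_sum_list_conv_sum_set_nat atLeast0LessThan)
qed

theorem proposition3p2:
  fixes n :: nat
  assumes "n > 24"
  shows "\<not> distance_balanced 2 (gp_verts n) (gp_adj n 4)"
proof
  assume balanced: "distance_balanced 2 (gp_verts n) (gp_adj n 4)"
  have n: "24 < n" using assms by simp
  have x: "(False, 0) \<in> gp_verts n" and y: "(True, 4) \<in> gp_verts n"
    using n by (auto simp: gp_verts_def)
  have "(0 + (n - 4)) mod n = n - 4" using n by simp
  then have "gdist (gp_verts n) (gp_adj n 4) (False, 0) (True, 4) = dist_uv n (n - 4)"
    using gdist_eq_distance_potential[OF distance_potential_v4[OF n] x]
    by (simp add: dist_v0_def gp_rot_def)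
  also have "\<dots> = 2" using reach_cyc_right[OF n, of "n - 4"] n by (simp add: dist_uv_def)
  finally have "gdist (gp_verts n) (gp_adj n 4) (False, 0) (True, 4) = 2" .
  moreover have "(\<Sum>i<n. balance n i) < 0"
    using sum_balance_neg_small[OF n] sum_balance_neg_large by (cases "n < 56") auto
  ultimately show False
    using balanced card_W_set_diff_eq_sum_balance[OF n] x y
    unfolding distance_balanced_def by force
qed

end
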